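(* Let $E$ be a (real) topological vector space, let $\Omega$ be a nonempty open subset of $E$, and let $f_0,\dots,f_m:\Omega\to\mathbb{R}$ be functions. Let $\hat{x}$ be a solution of the problem $$(\mathcal{P}_1)\qquad \max f_0(x)\quad\text{subject to } x\in\Omega,\ f_i(x)\ge 0\ \text{for all } i\in\{1,\dots,m\}.$$ Assume: (a) for every $j\in\{i\in\{1,\dots,m\}: f_i(\hat{x})>0\}$, $f_j$ is lower semicontinuous at $\hat{x}$; (b) for every $i\in\{0,\dots,m\}$, $f_i$ is $D^-_M$-differentiable at $\hat{x}$. Then there exist $\lambda^0,\dots,\lambda^m\in\mathbb{R}_+$ such that: (i) $(\lambda^0,\dots,\lambda^m)\neq(0,\dots,0)$; (ii) $\lambda^i f_i(\hat{x})=0$ for all $i\in\{1,\dots,m\}$; (iii) $\sum_{i=0}^m \lambda^i D^-_M f_i(\hat{x})(u)\le 0$ for all $u\in E$. If, in addition, (c) there exists $w\in E$ such that $D^-_M f_i(\hat{x})(w)>0$ for every $i\in\{1,\dots,m\}$ with $f_i(\hat{x})=0$, then one can take $\lambda^0=1$.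
   Context: For a function $f$ defined on an open set containing $x$ and a direction $u\in E$, the lower Dini derivative is $D^-f(x)(u):=\liminf_{t\to0^+}\frac{f(x+tu)-f(x)}{t}$, with the convention $D^-f(x)(0)=0$. The modified lower Dini derivative is $D^-_Mf(x)(u):=\inf_{w\in E}\{D^-f(x)(u+w)-D^-f(x)(w)\}$. The function $f$ is called $D^-_M$-differentiable at $x$ if $D^-_Mf(x)(u)$ and $D^-f(x)(u)$ are finite for every $u\in E$. *)

theory Defs
  imports "HOL-Analysis.Analysis"
begin

class real_tvs = real_vector + topological_space +
  assumes tvs_continuous_add:
    "\<And>a b::'a. filterlim (\<lambda>p. fst p + snd p) (nhds (a + b)) (nhds a \<times>\<^sub>F nhds b)"
  assumes tvs_continuous_scaleR:
    "\<And>(c::real) (a::'a). filterlim (\<lambda>p. fst p *\<^sub>R snd p) (nhds (c *\<^sub>R a)) (nhds c \<times>\<^sub>F nhds a)"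

definition lsc_at :: "('a::topological_space \<Rightarrow> real) \<Rightarrow> 'a \<Rightarrow> bool" where
  "lsc_at f x \<longleftrightarrow> (\<forall>a. a < f x \<longrightarrow> eventually (\<lambda>y. a < f y) (nhds x))"

definition lower_dini :: "('a::real_tvs \<Rightarrow> real) \<Rightarrow> 'a \<Rightarrow> 'a \<Rightarrow> ereal" where
  "lower_dini f x u = (if u = 0 then 0
     else Liminf (at_right (0::real)) (\<lambda>t. ereal ((f (x + t *\<^sub>R u) - f x) / t)))"

definition mod_lower_dini :: "('a::real_tvs \<Rightarrow> real) \<Rightarrow> 'a \<Rightarrow> 'a \<Rightarrow> ereal" where
  "mod_lower_dini f x u = (INF w. lower_dini f x (u + w) - lower_dini f x w)"

definition DM_differentiable :: "('a::real_tvs \<Rightarrow> real) \<Rightarrow> 'a \<Rightarrow> bool" where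
  "DM_differentiable f x \<longleftrightarrow>
     (\<forall>u. mod_lower_dini f x u \<noteq> \<infinity> \<and> mod_lower_dini f x u \<noteq> -\<infinity> \<and>
          lower_dini f x u \<noteq> \<infinity> \<and> lower_dini f x u \<noteq> -\<infinity>)"

end

theory Submission
  imports Defs
begin

text \<open>At a solution no direction \<open>u\<close> can have \<open>D\<^sup>- f\<^sub>i(x\<^sub>h)(u) > 0\<close> for the objective and all
  active constraints at once: moving a little along \<open>u\<close> would stay feasible (inactive constraints
  by lower semicontinuity) and increase \<open>f\<^sub>0\<close>. Since \<open>D\<^sup>-\<^sub>M f \<le> D\<^sup>- f\<close>, the modified derivatives,
  which are superlinear, have no common positivity direction either, and a Gordan-type theorem
  of the alternative for finitely many superlinear functions yields the multipliers. Under (c)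
  the multiplier of \<open>f\<^sub>0\<close> cannot vanish, so it can be normalised to 1.\<close>

text \<open>Unlike the library's \<^const>\<open>convex_cone\<close>, an additive cone need not contain 0, so that
  \<open>{u \<in> K. 0 < \<phi> u}\<close> is again one when \<open>\<phi>\<close> is superlinear.\<close>
definition additive_cone :: "'a::real_vector set \<Rightarrow> bool" where
  "additive_cone K \<longleftrightarrow> (\<forall>u\<in>K. \<forall>v\<in>K. u + v \<in> K) \<and> (\<forall>u\<in>K. \<forall>s>0. s *\<^sub>R u \<in> K)"

definition superlinear_on :: "'a::real_vector set \<Rightarrow> ('a \<Rightarrow> real) \<Rightarrow> bool" where
  "superlinear_on K \<phi> \<longleftrightarrow>
     (\<forall>u\<in>K. \<forall>v\<in>K. \<phi> u + \<phi> v \<le> \<phi> (u + v)) \<and> (\<forall>u\<in>K. \<forall>s>0. \<phi> (s *\<^sub>R u) = s * \<phi> u)"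

lemma superlinear_on_subset: "superlinear_on K \<phi> \<Longrightarrow> K' \<subseteq> K \<Longrightarrow> superlinear_on K' \<phi>"
  unfolding superlinear_on_def by blast

lemma superlinear_on_combination:
  assumes "additive_cone K" "superlinear_on K \<phi>" "u \<in> K" "v \<in> K" "0 < a" "0 < b"
  shows "a * \<phi> u + b * \<phi> v \<le> \<phi> (a *\<^sub>R u + b *\<^sub>R v)"
proof -
  have "a *\<^sub>R u \<in> K" "b *\<^sub>R v \<in> K"
    using assms(1,3-6) unfolding additive_cone_def by blast+
  then show ?thesis
    using assms(2-6) unfolding superlinear_on_def by metis
qed

lemma superlinear_on_sum:
  assumes "\<forall>i\<in>S. superlinear_on K (\<phi> i)" "\<forall>i\<in>S. 0 \<le> \<mu> i"
  shows "superlinear_on K (\<lambda>u. \<Sum>i\<in>S. \<mu> i * \<phi> i u)"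
  unfolding superlinear_on_def
proof (intro conjI ballI allI impI)
  fix u v assume "u \<in> K" "v \<in> K"
  then have "(\<Sum>i\<in>S. \<mu> i * (\<phi> i u + \<phi> i v)) \<le> (\<Sum>i\<in>S. \<mu> i * \<phi> i (u + v))"
    using assms unfolding superlinear_on_def by (intro sum_mono mult_left_mono) auto
  then show "(\<Sum>i\<in>S. \<mu> i * \<phi> i u) + (\<Sum>i\<in>S. \<mu> i * \<phi> i v) \<le> (\<Sum>i\<in>S. \<mu> i * \<phi> i (u + v))"
    by (simp add: sum.distrib distrib_left)
next
  fix u and s :: real assume "u \<in> K" "0 < s"
  then have "(\<Sum>i\<in>S. \<mu> i * \<phi> i (s *\<^sub>R u)) = (\<Sum>i\<in>S. s * (\<mu> i * \<phi> i u))"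
    using assms unfolding superlinear_on_def by (intro sum.cong) auto
  then show "(\<Sum>i\<in>S. \<mu> i * \<phi> i (s *\<^sub>R u)) = s * (\<Sum>i\<in>S. \<mu> i * \<phi> i u)"
    by (simp add: sum_distrib_left)
qed

lemma additive_cone_superlevel:
  assumes K: "additive_cone K" and \<phi>: "superlinear_on K \<phi>"
  shows "additive_cone {u\<in>K. 0 < \<phi> u}"
  unfolding additive_cone_def
proof (intro conjI ballI allI impI)
  fix u v assume "u \<in> {u\<in>K. 0 < \<phi> u}" "v \<in> {u\<in>K. 0 < \<phi> u}"
  then have "u + v \<in> K" "0 < \<phi> u + \<phi> v" "\<phi> u + \<phi> v \<le> \<phi> (u + v)"
    using K \<phi> unfolding additive_cone_def superlinear_on_def by auto
  then show "u + v \<in> {u\<in>K. 0 < \<phi> u}" by simp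
next
  fix u and s :: real assume "u \<in> {u\<in>K. 0 < \<phi> u}" "0 < s"
  with K \<phi> show "s *\<^sub>R u \<in> {u\<in>K. 0 < \<phi> u}"
    unfolding additive_cone_def superlinear_on_def by simp
qed

lemma superlinear_cross_le:
  assumes K: "additive_cone K" and \<phi>: "superlinear_on K \<phi>" and \<psi>: "superlinear_on K \<psi>"
    and no: "\<forall>u\<in>K. \<phi> u \<le> 0 \<or> \<psi> u \<le> 0"
    and u: "u \<in> K" "\<psi> u \<le> 0" and v: "v \<in> K" "0 < \<psi> v"
  shows "\<psi> v * \<phi> u \<le> \<psi> u * \<phi> v"
proof (rule ccontr)
  define D where "D = \<psi> v * \<phi> u - \<psi> u * \<phi> v"
  assume "\<not> ?thesis"
  then have "0 < D" unfolding D_def by simp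
  have "\<phi> v \<le> 0" using no v by force
  define e where "e = D / (1 - \<phi> v)"
  have "0 < e" using \<open>0 < D\<close> \<open>\<phi> v \<le> 0\<close> unfolding e_def by simp
  have "e * (1 - \<phi> v) = D" using \<open>\<phi> v \<le> 0\<close> unfolding e_def by simp
  then have "0 < D + e * \<phi> v" using \<open>0 < e\<close> by (simp add: algebra_simps)
  \<comment> \<open>Both functions are positive at \<open>w\<close>; the extra \<open>e\<close> keeps the second coefficient
    positive when \<open>\<psi> u = 0\<close>.\<close>
  define w where "w = \<psi> v *\<^sub>R u + (e - \<psi> u) *\<^sub>R v"
  have coeffs: "0 < \<psi> v" "0 < e - \<psi> u" using v(2) u(2) \<open>0 < e\<close> by auto
  have "w \<in> K"
    using K u(1) v(1) coeffs unfolding w_def additive_cone_def by blast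
  moreover have "\<psi> v * \<phi> u + (e - \<psi> u) * \<phi> v \<le> \<phi> w"
    unfolding w_def using superlinear_on_combination[OF K \<phi> u(1) v(1) coeffs] .
  then have "0 < \<phi> w" using \<open>0 < D + e * \<phi> v\<close> unfolding D_def by (simp add: algebra_simps)
  moreover have "\<psi> v * \<psi> u + (e - \<psi> u) * \<psi> v \<le> \<psi> w"
    unfolding w_def using superlinear_on_combination[OF K \<psi> u(1) v(1) coeffs] .
  then have "0 < \<psi> w" using mult_pos_pos[OF \<open>0 < e\<close> v(2)] by (simp add: algebra_simps)
  ultimately show False using no by force
qed

lemma superlinear_alternative2:
  assumes K: "additive_cone K" and \<phi>: "superlinear_on K \<phi>" and \<psi>: "superlinear_on K \<psi>"
    and no: "\<forall>u\<in>K. \<phi> u \<le> 0 \<or> \<psi> u \<le> 0"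
  shows "\<exists>a b. 0 \<le> a \<and> 0 \<le> b \<and> (a \<noteq> 0 \<or> b \<noteq> 0) \<and> (\<forall>u\<in>K. a * \<phi> u + b * \<psi> u \<le> 0)"
proof (cases "\<forall>u\<in>K. \<psi> u \<le> 0")
  case True
  then show ?thesis by (intro exI[of _ 0] exI[of _ 1]) auto
next
  case False
  then obtain v0 where v0: "v0 \<in> K" "0 < \<psi> v0" by force
  note cross = superlinear_cross_le[OF K \<phi> \<psi> no]
  \<comment> \<open>\<open>t\<close> is the largest slope allowed where \<open>\<psi> > 0\<close>, since there \<open>\<phi> + t \<psi> \<le> 0\<close> means
    \<open>t \<le> -\<phi>/\<psi>\<close>; the cross inequality shows it also works where \<open>\<psi> \<le> 0\<close>.\<close>
  define T where "T = {- \<phi> v / \<psi> v | v. v \<in> K \<and> 0 < \<psi> v}"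
  define t where "t = Inf T"
  have "T \<noteq> {}" using v0 unfolding T_def by blast
  have T_nonneg: "0 \<le> r" if "r \<in> T" for r
  proof -
    obtain v where "r = - \<phi> v / \<psi> v" "v \<in> K" "0 < \<psi> v" using \<open>r \<in> T\<close> unfolding T_def by blast
    moreover from this have "\<phi> v \<le> 0" using no by force
    ultimately show ?thesis by (simp add: divide_nonpos_pos)
  qed
  have "bdd_below T" using T_nonneg by (meson bdd_below.I)
  have "0 \<le> t" unfolding t_def using \<open>T \<noteq> {}\<close> T_nonneg by (rule cInf_greatest)
  have "\<phi> u + t * \<psi> u \<le> 0" if "u \<in> K" for u
  proof (cases "\<psi> u" "0::real" rule: linorder_cases)
    case greater
    then have "t \<le> - \<phi> u / \<psi> u"
      unfolding t_def using \<open>bdd_below T\<close> \<open>u \<in> K\<close> by (intro cInf_lower) (auto simp: T_def)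
    then show ?thesis using greater by (simp add: field_simps)
  next
    case equal
    then show ?thesis using cross[OF \<open>u \<in> K\<close> _ v0] v0(2) by (simp add: mult_le_0_iff)
  next
    case less
    have "\<phi> u / (- \<psi> u) \<le> t" unfolding t_def
    proof (rule cInf_greatest[OF \<open>T \<noteq> {}\<close>])
      fix r assume "r \<in> T"
      then obtain v where v: "r = - \<phi> v / \<psi> v" "v \<in> K" "0 < \<psi> v" unfolding T_def by blast
      have "\<psi> v * \<phi> u \<le> \<psi> u * \<phi> v" using cross[OF \<open>u \<in> K\<close> _ v(2,3)] less by simp
      also have "\<dots> = \<psi> v * (r * (- \<psi> u))" using v(1,3) by simp
      finally have "\<phi> u \<le> r * (- \<psi> u)" using v(3) by (rule mult_left_le_imp_le)
      then show "\<phi> u / (- \<psi> u) \<le> r" using less by (metis neg_0_less_iff_less pos_divide_le_eq)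
    qed
    then show ?thesis using less by (simp add: field_simps)
  qed
  then show ?thesis using \<open>0 \<le> t\<close> by (intro exI[of _ 1] exI[of _ t]) auto
qed

lemma superlinear_alternative:
  assumes "finite S" "S \<noteq> {}" "additive_cone K" "\<forall>i\<in>S. superlinear_on K (\<phi> i)"
    and "\<forall>u\<in>K. \<exists>i\<in>S. \<phi> i u \<le> 0"
  shows "\<exists>lam. (\<forall>i\<in>S. 0 \<le> lam i) \<and> (\<exists>i\<in>S. lam i \<noteq> 0) \<and> (\<forall>u\<in>K. (\<Sum>i\<in>S. lam i * \<phi> i u) \<le> 0)"
  using assms
proof (induction S arbitrary: K rule: finite_ne_induct)
  case (singleton j)
  then show ?case by (intro exI[of _ "\<lambda>_. 1"]) auto
next
  case (insert j S)
  note K = \<open>additive_cone K\<close>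
  have \<phi>j: "superlinear_on K (\<phi> j)" and \<phi>S: "\<forall>i\<in>S. superlinear_on K (\<phi> i)"
    using insert.prems(2) by auto
  define K' where "K' = {u\<in>K. 0 < \<phi> j u}"
  have "additive_cone K'"
    unfolding K'_def using K \<phi>j by (rule additive_cone_superlevel)
  moreover have "\<forall>i\<in>S. superlinear_on K' (\<phi> i)"
    using \<phi>S superlinear_on_subset[of K _ K'] unfolding K'_def by blast
  moreover have "\<forall>u\<in>K'. \<exists>i\<in>S. \<phi> i u \<le> 0"
    using insert.prems(3) unfolding K'_def by auto
  ultimately obtain \<mu> where \<mu>: "\<forall>i\<in>S. 0 \<le> \<mu> i" "\<exists>i\<in>S. \<mu> i \<noteq> 0"
      "\<forall>u\<in>K'. (\<Sum>i\<in>S. \<mu> i * \<phi> i u) \<le> 0"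
    using insert.IH by blast
  define \<psi> where "\<psi> u = (\<Sum>i\<in>S. \<mu> i * \<phi> i u)" for u
  have "superlinear_on K \<psi>"
    unfolding \<psi>_def using \<phi>S \<mu>(1) by (rule superlinear_on_sum)
  moreover have "\<forall>u\<in>K. \<phi> j u \<le> 0 \<or> \<psi> u \<le> 0"
    using \<mu>(3) unfolding K'_def \<psi>_def by (auto simp: not_le)
  ultimately obtain a b where ab: "0 \<le> a" "0 \<le> b" "a \<noteq> 0 \<or> b \<noteq> 0"
      "\<forall>u\<in>K. a * \<phi> j u + b * \<psi> u \<le> 0"
    using superlinear_alternative2[OF K \<phi>j] by blast
  define lam where "lam i = (if i = j then a else b * \<mu> i)" for i
  have "(\<Sum>i\<in>insert j S. lam i * \<phi> i u) = a * \<phi> j u + b * \<psi> u" for u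
  proof -
    have "(\<Sum>i\<in>S. lam i * \<phi> i u) = b * \<psi> u"
      unfolding \<psi>_def sum_distrib_left using \<open>j \<notin> S\<close>
      by (intro sum.cong) (auto simp: lam_def)
    then show ?thesis using insert.hyps(1) \<open>j \<notin> S\<close> by (simp add: lam_def)
  qed
  moreover have "\<exists>i\<in>insert j S. lam i \<noteq> 0"
    using ab(3) \<mu>(2) \<open>j \<notin> S\<close> unfolding lam_def by fastforce
  moreover have "\<forall>i\<in>insert j S. 0 \<le> lam i"
    using ab(1,2) \<mu>(1) by (simp add: lam_def)
  ultimately show ?case
    using ab(4) by (intro exI[of _ lam]) simp
qed

lemma superlinear_on_INF_increments:
  fixes g h :: "'a::real_vector \<Rightarrow> real"
  assumes g_hom: "\<And>s u. 0 < s \<Longrightarrow> g (s *\<^sub>R u) = s * g u"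
    and h: "\<And>u. ereal (h u) = (INF w. ereal (g (u + w) - g w))"
  shows "superlinear_on UNIV h"
proof -
  have h_le: "h u \<le> g (u + w) - g w" for u w
  proof -
    have "ereal (h u) \<le> ereal (g (u + w) - g w)" unfolding h by (rule INF_lower) simp
    then show ?thesis by simp
  qed
  have h_ge: "c \<le> h u" if "\<And>w. c \<le> g (u + w) - g w" for c u
  proof -
    have "ereal c \<le> ereal (h u)" unfolding h by (rule INF_greatest) (simp add: that)
    then show ?thesis by simp
  qed
  have "h u + h v \<le> h (u + v)" for u v
  proof (rule h_ge)
    fix w
    show "h u + h v \<le> g (u + v + w) - g w"
      using h_le[of u "v + w"] h_le[of v w] by (simp add: add.assoc)
  qed
  moreover have hom_ge: "s * h u \<le> h (s *\<^sub>R u)" if "0 < s" for s u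
  proof (rule h_ge)
    fix w
    have "s * h u \<le> s * (g (u + w /\<^sub>R s) - g (w /\<^sub>R s))"
      using h_le that by (simp add: mult_left_mono)
    also have "\<dots> = g (s *\<^sub>R u + w) - g w"
      using g_hom[OF that, of "u + w /\<^sub>R s"] g_hom[OF that, of "w /\<^sub>R s"] that
      by (simp add: right_diff_distrib scaleR_add_right)
    finally show "s * h u \<le> g (s *\<^sub>R u + w) - g w" .
  qed
  moreover have "h (s *\<^sub>R u) = s * h u" if "0 < s" for s u
  proof -
    have "inverse s * h (s *\<^sub>R u) \<le> h u"
      using hom_ge[of "inverse s" "s *\<^sub>R u"] that by simp
    then show ?thesis using hom_ge[OF that, of u] that by (simp add: field_simps)
  qed
  ultimately show ?thesis unfolding superlinear_on_def by simp
qed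

lemma lower_dini_zero [simp]: "lower_dini f x 0 = 0"
  by (simp add: lower_dini_def)

lemma lower_dini_scaleR:
  assumes s: "0 < s"
  shows "lower_dini f x (s *\<^sub>R u) = ereal s * lower_dini f x u"
proof (cases "u = 0")
  case False
  define q where "q t = ereal ((f (x + t *\<^sub>R u) - f x) / t)" for t
  have "ereal ((f (x + t *\<^sub>R (s *\<^sub>R u)) - f x) / t) = ereal s * q (s * t)" for t
    using s unfolding q_def by (cases "t = 0") (simp_all add: field_simps)
  then have "lower_dini f x (s *\<^sub>R u) = Liminf (at_right 0) (\<lambda>t. ereal s * q (s * t))"
    unfolding lower_dini_def using False s by simp
  also have "\<dots> = ereal s * Liminf (at_right 0) (\<lambda>t. q (s * t))"
    by (rule Liminf_ereal_mult_left) (use s in auto)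
  also have "Liminf (at_right 0) (\<lambda>t. q (s * t)) = Liminf (filtermap (times s) (at_right 0)) q"
    by (rule Liminf_filtermap_eq[symmetric]) (use s in \<open>auto simp: inj_on_def\<close>)
  also have "filtermap (times s) (at_right 0) = at_right (0::real)"
    using filtermap_times_pos_at_right[OF s, of 0] by simp
  finally show ?thesis unfolding lower_dini_def q_def using False by simp
qed simp

lemma mod_lower_dini_le_lower_dini: "mod_lower_dini f x u \<le> lower_dini f x u"
  unfolding mod_lower_dini_def by (rule INF_lower2[of 0]) simp_all

lemma lower_dini_pos_imp_eventually_less:
  assumes "0 < lower_dini f x u"
  shows "eventually (\<lambda>t. f x < f (x + t *\<^sub>R u)) (at_right 0)"
proof -
  have "u \<noteq> 0" using assms by auto
  then have "0 < Liminf (at_right 0) (\<lambda>t. ereal ((f (x + t *\<^sub>R u) - f x) / t))"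
    using assms unfolding lower_dini_def by simp
  then have "eventually (\<lambda>t. 0 < ereal ((f (x + t *\<^sub>R u) - f x) / t)) (at_right 0)"
    by (rule less_LiminfD)
  with eventually_at_right_less show ?thesis
    by eventually_elim (simp add: zero_less_divide_iff)
qed

lemma DM_differentiable_finite:
  assumes "DM_differentiable f x"
  shows "ereal (real_of_ereal (lower_dini f x u)) = lower_dini f x u"
    and "ereal (real_of_ereal (mod_lower_dini f x u)) = mod_lower_dini f x u"
  using assms unfolding DM_differentiable_def
  by (metis ereal_real' abs_ereal_uminus ereal_infinity_cases)+

lemma superlinear_mod_lower_dini:
  assumes "DM_differentiable f x"
  shows "superlinear_on UNIV (\<lambda>u. real_of_ereal (mod_lower_dini f x u))"
proof (rule superlinear_on_INF_increments)
  show "real_of_ereal (lower_dini f x (s *\<^sub>R u)) = s * real_of_ereal (lower_dini f x u)"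
    if "0 < s" for s u
    using that by (simp add: lower_dini_scaleR)
  have diff: "lower_dini f x (u + w) - lower_dini f x w =
      ereal (real_of_ereal (lower_dini f x (u + w)) - real_of_ereal (lower_dini f x w))" for u w
    by (metis DM_differentiable_finite(1)[OF assms] ereal_minus(1))
  show "ereal (real_of_ereal (mod_lower_dini f x u)) =
      (INF w. ereal (real_of_ereal (lower_dini f x (u + w)) - real_of_ereal (lower_dini f x w)))" for u
    using DM_differentiable_finite(2)[OF assms, of u] unfolding mod_lower_dini_def diff .
qed

lemma tvs_tendsto_add:
  fixes f g :: "'b \<Rightarrow> 'a::real_tvs"
  assumes "(f \<longlongrightarrow> a) F" "(g \<longlongrightarrow> b) F"
  shows "((\<lambda>x. f x + g x) \<longlongrightarrow> a + b) F"
  using filterlim_compose[OF tvs_continuous_add filterlim_Pair[OF assms]] by simp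

lemma tvs_tendsto_scaleR:
  fixes c :: "'b \<Rightarrow> real" and g :: "'b \<Rightarrow> 'a::real_tvs"
  assumes "(c \<longlongrightarrow> r) F" "(g \<longlongrightarrow> a) F"
  shows "((\<lambda>x. c x *\<^sub>R g x) \<longlongrightarrow> r *\<^sub>R a) F"
  using filterlim_compose[OF tvs_continuous_scaleR filterlim_Pair[OF assms]] by simp

lemma tvs_tendsto_ray:
  fixes x u :: "'a::real_tvs"
  shows "((\<lambda>t. x + t *\<^sub>R u) \<longlongrightarrow> x) (at_right (0::real))"
proof -
  have "((\<lambda>t. x + t *\<^sub>R u) \<longlongrightarrow> x + 0 *\<^sub>R u) (at_right (0::real))"
    by (intro tvs_tendsto_add tvs_tendsto_scaleR tendsto_const tendsto_ident_at)
  then show ?thesis by simp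
qed

lemma no_common_ascent_direction:
  fixes \<Omega> :: "'a::real_tvs set" and f :: "nat \<Rightarrow> 'a \<Rightarrow> real"
  assumes "open \<Omega>" "xh \<in> \<Omega>"
    and feas: "\<forall>i\<in>{1..m}. f i xh \<ge> 0"
    and max: "\<forall>x\<in>\<Omega>. (\<forall>i\<in>{1..m}. f i x \<ge> 0) \<longrightarrow> f 0 x \<le> f 0 xh"
    and lsc: "\<forall>j\<in>{i\<in>{1..m}. f i xh > 0}. lsc_at (f j) xh"
  shows "\<exists>i\<in>insert 0 {i\<in>{1..m}. f i xh = 0}. lower_dini (f i) xh u \<le> 0"
proof (rule ccontr)
  define A where "A = insert 0 {i\<in>{1..m}. f i xh = 0}"
  define I where "I = {i\<in>{1..m}. f i xh > 0}"
  assume "\<not> ?thesis"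
  then have "\<forall>i\<in>A. 0 < lower_dini (f i) xh u" by (auto simp: A_def not_le)
  then have "eventually (\<lambda>t. \<forall>i\<in>A. f i xh < f i (xh + t *\<^sub>R u)) (at_right 0)"
    by (intro eventually_ball_finite ballI lower_dini_pos_imp_eventually_less) (auto simp: A_def)
  moreover have "eventually (\<lambda>t. \<forall>i\<in>I. 0 < f i (xh + t *\<^sub>R u)) (at_right 0)"
  proof (intro eventually_ball_finite ballI)
    fix i assume "i \<in> I"
    then have "eventually (\<lambda>y. 0 < f i y) (nhds xh)"
      using lsc unfolding I_def lsc_at_def by auto
    then show "eventually (\<lambda>t. 0 < f i (xh + t *\<^sub>R u)) (at_right 0)"
      using tvs_tendsto_ray unfolding filterlim_iff by blast
  qed (simp add: I_def)
  moreover have "eventually (\<lambda>t. xh + t *\<^sub>R u \<in> \<Omega>) (at_right 0)"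
    using topological_tendstoD[OF tvs_tendsto_ray \<open>open \<Omega>\<close> \<open>xh \<in> \<Omega>\<close>] .
  ultimately have "eventually (\<lambda>t. (\<forall>i\<in>A. f i xh < f i (xh + t *\<^sub>R u)) \<and>
      (\<forall>i\<in>I. 0 < f i (xh + t *\<^sub>R u)) \<and> xh + t *\<^sub>R u \<in> \<Omega>) (at_right 0)"
    by eventually_elim blast
  then obtain t where t: "\<forall>i\<in>A. f i xh < f i (xh + t *\<^sub>R u)"
      "\<forall>i\<in>I. 0 < f i (xh + t *\<^sub>R u)" "xh + t *\<^sub>R u \<in> \<Omega>"
    using eventually_happens' trivial_limit_at_right_real by blast
  have "\<forall>i\<in>{1..m}. f i (xh + t *\<^sub>R u) \<ge> 0"
  proof
    fix i assume "i \<in> {1..m}"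
    then consider "i \<in> A" "f i xh = 0" | "i \<in> I"
      using feas unfolding A_def I_def by force
    then show "f i (xh + t *\<^sub>R u) \<ge> 0"
      using t(1,2) by cases force+
  qed
  then have "f 0 (xh + t *\<^sub>R u) \<le> f 0 xh" using max t(3) by blast
  with t(1) show False unfolding A_def by auto
qed

definition fritz_john_multipliers ::
    "(nat \<Rightarrow> 'a::real_tvs \<Rightarrow> real) \<Rightarrow> 'a \<Rightarrow> nat \<Rightarrow> (nat \<Rightarrow> real) \<Rightarrow> bool" where
  "fritz_john_multipliers f x m lam \<longleftrightarrow>
     (\<forall>i\<in>{0..m}. 0 \<le> lam i) \<and> (\<forall>i\<in>{1..m}. lam i * f i x = 0) \<and>
     (\<forall>u. (\<Sum>i=0..m. lam i * real_of_ereal (mod_lower_dini (f i) x u)) \<le> 0)"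

lemma fritz_john_multipliers_scale:
  assumes "fritz_john_multipliers f x m lam" "0 < c"
  shows "fritz_john_multipliers f x m (\<lambda>i. c * lam i)"
proof -
  have "(\<Sum>i=0..m. c * lam i * real_of_ereal (mod_lower_dini (f i) x u)) =
      c * (\<Sum>i=0..m. lam i * real_of_ereal (mod_lower_dini (f i) x u))" for u
    by (simp add: sum_distrib_left mult.assoc)
  then show ?thesis
    using assms unfolding fritz_john_multipliers_def by (simp add: mult_nonneg_nonpos)
qed

lemma fritz_john_conditions:
  fixes \<Omega> :: "'a::real_tvs set" and f :: "nat \<Rightarrow> 'a \<Rightarrow> real"
  assumes "open \<Omega>" "xh \<in> \<Omega>"
    and feas: "\<forall>i\<in>{1..m}. f i xh \<ge> 0"
    and max: "\<forall>x\<in>\<Omega>. (\<forall>i\<in>{1..m}. f i x \<ge> 0) \<longrightarrow> f 0 x \<le> f 0 xh"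
    and lsc: "\<forall>j\<in>{i\<in>{1..m}. f i xh > 0}. lsc_at (f j) xh"
    and DM: "\<forall>i\<in>{0..m}. DM_differentiable (f i) xh"
  shows "\<exists>lam. fritz_john_multipliers f xh m lam \<and> (\<exists>i\<in>{0..m}. lam i \<noteq> 0)"
proof -
  define A where "A = insert 0 {i\<in>{1..m}. f i xh = 0}"
  define \<phi> where "\<phi> i u = real_of_ereal (mod_lower_dini (f i) xh u)" for i u
  have A: "finite A" "A \<noteq> {}" "A \<subseteq> {0..m}" unfolding A_def by auto
  have cone: "additive_cone (UNIV :: 'a set)" by (simp add: additive_cone_def)
  have superlinear: "\<forall>i\<in>A. superlinear_on UNIV (\<phi> i)"
    using DM A(3) unfolding \<phi>_def by (auto intro: superlinear_mod_lower_dini)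
  have no_ascent: "\<forall>u\<in>UNIV. \<exists>i\<in>A. \<phi> i u \<le> 0"
  proof
    fix u :: 'a
    obtain i where "i \<in> A" "lower_dini (f i) xh u \<le> 0"
      using no_common_ascent_direction[OF assms(1-5)] unfolding A_def by blast
    then have "mod_lower_dini (f i) xh u \<le> 0"
      using mod_lower_dini_le_lower_dini order_trans by blast
    then show "\<exists>i\<in>A. \<phi> i u \<le> 0" using \<open>i \<in> A\<close> unfolding \<phi>_def by auto
  qed
  obtain lam where lam: "\<forall>i\<in>A. 0 \<le> lam i" "\<exists>i\<in>A. lam i \<noteq> 0"
      "\<forall>u\<in>UNIV. (\<Sum>i\<in>A. lam i * \<phi> i u) \<le> 0"
    using superlinear_alternative[OF A(1,2) cone superlinear no_ascent] by blast
  define L where "L i = (if i \<in> A then lam i else 0)" for i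
  have "(\<Sum>i=0..m. L i * \<phi> i u) = (\<Sum>i\<in>A. lam i * \<phi> i u)" for u
    using A by (intro sum.mono_neutral_cong_right) (auto simp: L_def)
  then have "fritz_john_multipliers f xh m L"
    using lam(1,3) unfolding fritz_john_multipliers_def \<phi>_def[symmetric]
    by (auto simp: L_def A_def)
  moreover have "\<exists>i\<in>{0..m}. L i \<noteq> 0" using lam(2) A(3) by (auto simp: L_def)
  ultimately show ?thesis by blast
qed

lemma fritz_john_multipliers_normalize:
  assumes FJ: "fritz_john_multipliers f x m L" and nz: "\<exists>i\<in>{0..m}. L i \<noteq> 0"
    and DM: "\<forall>i\<in>{1..m}. DM_differentiable (f i) x"
    and w: "\<forall>i\<in>{1..m}. f i x = 0 \<longrightarrow> 0 < mod_lower_dini (f i) x w"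
  shows "\<exists>lam. fritz_john_multipliers f x m lam \<and> lam 0 = 1"
proof -
  define \<phi> where "\<phi> i = real_of_ereal (mod_lower_dini (f i) x w)" for i
  have L_nonneg: "\<forall>i\<in>{0..m}. 0 \<le> L i" and sum_nonpos: "(\<Sum>i=0..m. L i * \<phi> i) \<le> 0"
    using FJ unfolding fritz_john_multipliers_def \<phi>_def by auto
  have pos: "0 < L i * \<phi> i" if "i \<in> {1..m}" "L i \<noteq> 0" for i
  proof -
    have "f i x = 0" using FJ that unfolding fritz_john_multipliers_def by auto
    moreover have "ereal (\<phi> i) = mod_lower_dini (f i) x w"
      unfolding \<phi>_def using DM that by (intro DM_differentiable_finite(2)) auto
    ultimately have "0 < ereal (\<phi> i)" using w that by auto
    moreover have "0 < L i" using L_nonneg that by force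
    ultimately show ?thesis by simp
  qed
  have "L 0 \<noteq> 0"
  proof
    assume "L 0 = 0"
    obtain k where "k \<in> {0..m}" and k: "L k \<noteq> 0" using nz by blast
    with \<open>L 0 = 0\<close> have "k \<in> {1..m}" by (cases k) auto
    have "0 \<le> L i * \<phi> i" if "i \<in> {0..m}" for i
      using pos[of i] \<open>L 0 = 0\<close> that by (cases "i = 0 \<or> L i = 0") auto
    then have "0 < (\<Sum>i=0..m. L i * \<phi> i)"
      using pos[OF \<open>k \<in> {1..m}\<close> k] \<open>k \<in> {1..m}\<close> by (intro sum_pos2[of _ k]) auto
    with sum_nonpos show False by simp
  qed
  then have "0 < L 0" using L_nonneg by force
  then show ?thesis
    using fritz_john_multipliers_scale[OF FJ, of "inverse (L 0)"] by (intro exI) auto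
qed

theorem theorem1p1:
  fixes \<Omega> :: "'a::real_tvs set" and f :: "nat \<Rightarrow> 'a \<Rightarrow> real" and m :: nat and xh :: 'a
  assumes "open \<Omega>" and "\<Omega> \<noteq> {}"
    and sol_in: "xh \<in> \<Omega>"
    and sol_feas: "\<forall>i\<in>{1..m}. f i xh \<ge> 0"
    and sol_max: "\<forall>x\<in>\<Omega>. (\<forall>i\<in>{1..m}. f i x \<ge> 0) \<longrightarrow> f 0 x \<le> f 0 xh"
    and a: "\<forall>j\<in>{i\<in>{1..m}. f i xh > 0}. lsc_at (f j) xh"
    and b: "\<forall>i\<in>{0..m}. DM_differentiable (f i) xh"
  shows "(\<exists>lam::nat \<Rightarrow> real. (\<forall>i\<in>{0..m}. lam i \<ge> 0)
            \<and> (\<exists>i\<in>{0..m}. lam i \<noteq> 0)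
            \<and> (\<forall>i\<in>{1..m}. lam i * f i xh = 0)
            \<and> (\<forall>u. (\<Sum>i=0..m. lam i * real_of_ereal (mod_lower_dini (f i) xh u)) \<le> 0))
       \<and> ((\<exists>w. \<forall>i\<in>{1..m}. f i xh = 0 \<longrightarrow> mod_lower_dini (f i) xh w > 0) \<longrightarrow>
          (\<exists>lam::nat \<Rightarrow> real. (\<forall>i\<in>{0..m}. lam i \<ge> 0) \<and> lam 0 = 1
            \<and> (\<forall>i\<in>{1..m}. lam i * f i xh = 0)
            \<and> (\<forall>u. (\<Sum>i=0..m. lam i * real_of_ereal (mod_lower_dini (f i) xh u)) \<le> 0)))"
proof -
  obtain L where L: "fritz_john_multipliers f xh m L" "\<exists>i\<in>{0..m}. L i \<noteq> 0"
    using fritz_john_conditions[OF \<open>open \<Omega>\<close> sol_in sol_feas sol_max a b] by blast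
  moreover have "\<exists>lam. fritz_john_multipliers f xh m lam \<and> lam 0 = 1"
    if "\<forall>i\<in>{1..m}. f i xh = 0 \<longrightarrow> 0 < mod_lower_dini (f i) xh w" for w
    using fritz_john_multipliers_normalize[OF L _ that] b by simp
  ultimately show ?thesis unfolding fritz_john_multipliers_def by blast
qed

end
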